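(* Fix integers $m>1$ and $K>\lfloor m/2\rfloor$. Let $\{z_n\}$ be generated by $\mathcal{S}(\kappa,\Phi)$ with $\kappa$ satisfying $\sum_n\rho^{\kappa(n)}=\infty$ for all $0<\rho\le1$ and $\Phi(x,S)=|V_S(x)|-\operatorname{modefreq}_f(V_S(x))$ with $V_S(x)$ the $K$-nearest neighbors of $x$ with respect to $S$, and let $\zeta_n(x)=\operatorname{mode}_f(U_{Z_n}(x))$ be the $m$ nearest neighbors prediction. If $x\in X$ is contained in an $f$-contiguous component of positive $\mu$-measure, then $\zeta_n(x)\to f(x)$ with probability one.
   Context: $(X,d)$ metric space with probability measure $\mu$; $Y$ countable; $f:X\to Y$; $X_y=f^{-1}(y)$; $\operatorname{supp}(\mu)=\{x:\mu(B_\epsilon(x))>0\ \forall\epsilon>0\}$. $b$ is an $f$-boundary point iff $\mu(B_\epsilon(b)\setminus X_{f(b)})>0$ for all $\epsilon>0$. $R$ is $f$-connected iff connected and contained in some $X_y$; $f$-contiguous iff $f$-connected, contained in $\operatorname{supp}(\mu)$, and with no $f$-boundary points; an $f$-contiguous component is a maximal $f$-contiguous set. $\operatorname{modefreq}_f(A)=\max_y|A\cap X_y|$ ($0$ for empty $A$); $\operatorname{mode}_f(A)$ is a $y$ attaining it (ties uniformly at random). $K$-nearest neighbors: $V_S(x)=\emptyset$ if $x\in S$, otherwise a $K$-element subset of $S$ minimizing distance to $x$, chosen among such to minimize $\operatorname{modefreq}_f$. $m$ nearest neighbors: $U_S(x)=\{x\}$ if $x\in S$, otherwise an $m$-element subset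 of $S$ minimizing distance to $x$, chosen among such to minimize $\operatorname{modefreq}_f$. Process $\mathcal{S}(\kappa,\Phi)$: $Z_0=\emptyset$; at step $n$ draw $\kappa(n)$ candidates i.i.d. from $\mu$, independent of the past; $z_n$ maximizes $\Phi(\cdot,Z_{n-1})$ over candidates (ties uniformly at random); $Z_n=\{z_1,\dots,z_n\}$. *)

theory Defs
  imports "HOL-Probability.Probability"
begin

definition supp_measure :: "'a::metric_space measure \<Rightarrow> 'a set" where
  "supp_measure \<mu> = {x. \<forall>e>0. emeasure \<mu> (ball x e) > 0}"

definition f_boundary_point :: "'a::metric_space measure \<Rightarrow> ('a \<Rightarrow> 'b) \<Rightarrow> 'a \<Rightarrow> bool" where
  "f_boundary_point \<mu> f b \<longleftrightarrow> (\<forall>e>0. emeasure \<mu> (ball b e - f -` {f b}) > 0)"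

definition f_connected :: "('a::metric_space \<Rightarrow> 'b) \<Rightarrow> 'a set \<Rightarrow> bool" where
  "f_connected f R \<longleftrightarrow> connected R \<and> (\<exists>y. R \<subseteq> f -` {y})"

definition f_contiguous :: "'a::metric_space measure \<Rightarrow> ('a \<Rightarrow> 'b) \<Rightarrow> 'a set \<Rightarrow> bool" where
  "f_contiguous \<mu> f R \<longleftrightarrow> f_connected f R \<and> R \<subseteq> supp_measure \<mu>
      \<and> (\<forall>b\<in>R. \<not> f_boundary_point \<mu> f b)"

definition f_contiguous_component :: "'a::metric_space measure \<Rightarrow> ('a \<Rightarrow> 'b) \<Rightarrow> 'a set \<Rightarrow> bool" where
  "f_contiguous_component \<mu> f C \<longleftrightarrow> f_contiguous \<mu> f C
      \<and> (\<forall>R. f_contiguous \<mu> f R \<and> C \<subseteq> R \<longrightarrow> R = C)"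

definition modefreq :: "('a \<Rightarrow> 'b) \<Rightarrow> 'a set \<Rightarrow> nat" where
  "modefreq f A = (if A = {} then 0 else Max ((\<lambda>y. card (A \<inter> f -` {y})) ` (f ` A)))"

text \<open>The set of values attaining the mode frequency (the possible values of mode_f A).\<close>
definition modes :: "('a \<Rightarrow> 'b) \<Rightarrow> 'a set \<Rightarrow> 'b set" where
  "modes f A = {y. card (A \<inter> f -` {y}) = modefreq f A}"

definition nn_sets :: "nat \<Rightarrow> 'a::metric_space set \<Rightarrow> 'a \<Rightarrow> 'a set set" where
  "nn_sets k S x = {V. V \<subseteq> S \<and> card V = min k (card S)
      \<and> (\<forall>v\<in>V. \<forall>s\<in>S - V. dist x v \<le> dist x s)}"

definition knn_sets :: "nat \<Rightarrow> ('a::metric_space \<Rightarrow> 'b) \<Rightarrow> 'a set \<Rightarrow> 'a \<Rightarrow> 'a set set" where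
  "knn_sets k f S x = {V \<in> nn_sets k S x. \<forall>W\<in>nn_sets k S x. modefreq f V \<le> modefreq f W}"

text \<open>K nearest neighbours V_S(x) (an arbitrary admissible choice).\<close>
definition V_nn :: "nat \<Rightarrow> ('a::metric_space \<Rightarrow> 'b) \<Rightarrow> 'a set \<Rightarrow> 'a \<Rightarrow> 'a set" where
  "V_nn K f S x = (if x \<in> S then {} else (SOME V. V \<in> knn_sets K f S x))"

definition Phi_knn :: "nat \<Rightarrow> ('a::metric_space \<Rightarrow> 'b) \<Rightarrow> 'a \<Rightarrow> 'a set \<Rightarrow> real" where
  "Phi_knn K f x S = real (card (V_nn K f S x)) - real (modefreq f (V_nn K f S x))"

definition U_sets :: "nat \<Rightarrow> ('a::metric_space \<Rightarrow> 'b) \<Rightarrow> 'a set \<Rightarrow> 'a \<Rightarrow> 'a set set" where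
  "U_sets m f S x = (if x \<in> S then {{x}} else knn_sets m f S x)"

text \<open>All possible values of the prediction mode_f(U_S(x)), over all admissible
  choices of U_S(x) and all tie-breaks of the mode.\<close>
definition predictions :: "nat \<Rightarrow> ('a::metric_space \<Rightarrow> 'b) \<Rightarrow> 'a set \<Rightarrow> 'a \<Rightarrow> 'b set" where
  "predictions m f S x = (\<Union>U\<in>U_sets m f S x. modes f U)"

text \<open>c n i = (candidate point, auxiliary uniform label) of the i-th candidate at step n.
  Among the candidates maximizing Phi, the one with largest label is taken (this
  realizes uniformly random tie-breaking, since the labels are i.i.d. uniform and
  independent of everything else); remaining (null-probability) ties: smallest index.\<close>
definition select_index ::
  "('a \<Rightarrow> 'a set \<Rightarrow> real) \<Rightarrow> (nat \<Rightarrow> nat) \<Rightarrow> (nat \<Rightarrow> nat \<Rightarrow> 'a \<times> real) \<Rightarrow> nat \<Rightarrow> 'a set \<Rightarrow> nat" where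
  "select_index \<Phi> \<kappa> c n S =
     (let best = {i. i < \<kappa> n \<and> (\<forall>j<\<kappa> n. \<Phi> (fst (c n j)) S \<le> \<Phi> (fst (c n i)) S)};
          top = {i\<in>best. \<forall>j\<in>best. snd (c n j) \<le> snd (c n i)}
      in Min top)"

primrec Zproc ::
  "('a \<Rightarrow> 'a set \<Rightarrow> real) \<Rightarrow> (nat \<Rightarrow> nat) \<Rightarrow> (nat \<Rightarrow> nat \<Rightarrow> 'a \<times> real) \<Rightarrow> nat \<Rightarrow> 'a set" where
  "Zproc \<Phi> \<kappa> c 0 = {}"
| "Zproc \<Phi> \<kappa> c (Suc n) =
     insert (fst (c (Suc n) (select_index \<Phi> \<kappa> c (Suc n) (Zproc \<Phi> \<kappa> c n)))) (Zproc \<Phi> \<kappa> c n)"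

end

theory Submission
  imports Defs
begin

text \<open>
  Since \<open>x\<close> is not an \<open>f\<close>-boundary point, some ball \<open>B(x, e)\<close> is labelled \<open>f x\<close> up to a
  \<open>\<mu>\<close>-null set, so almost surely no candidate ever lands in the exceptional part. Since \<open>x\<close>
  lies in the support, every ball \<open>B(x, r)\<close> has measure \<open>\<rho> > 0\<close>; all \<open>\<kappa>(n)\<close> candidates
  of step \<open>n\<close> fall into it with probability \<open>\<rho>^\<kappa>(n)\<close>, independently over \<open>n\<close>, and
  divergence of \<open>\<Sum>\<rho>^\<kappa>(n)\<close> makes this happen at some step almost surely. At such a step the
  selected point lies in \<open>B(x, r)\<close>, whatever \<open>\<Phi>\<close> prefers. Hence \<open>x\<close> is selected or is a
  limit point of the selected points, so eventually the \<open>m\<close> nearest selected points lie in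
  \<open>B(x, e)\<close> and all carry the label \<open>f x\<close>.
\<close>

section \<open>Nearest neighbours and modes\<close>

lemma nn_sets_nonempty:
  fixes S :: "'a::metric_space set"
  assumes "finite S"
  shows "nn_sets k S x \<noteq> {}"
proof -
  define F where "F = {V. V \<subseteq> S \<and> card V = min k (card S)}"
  define g where "g V = (\<Sum>v\<in>V. dist x v)" for V
  have "finite F" unfolding F_def using assms by (auto intro: finite_subset[of _ "Pow S"])
  moreover have "F \<noteq> {}"
    using obtain_subset_with_card_n[of "min k (card S)" S] by (auto simp: F_def)
  ultimately obtain V where "is_arg_min g (\<lambda>V. V \<in> F) V"
    using ex_is_arg_min_if_finite by blast
  then have "V \<in> F" and V_min: "\<And>W. W \<in> F \<Longrightarrow> g V \<le> g W"
    by (simp_all add: is_arg_min_linorder)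
  then have "V \<subseteq> S" "card V = min k (card S)" "finite V"
    using assms by (auto simp: F_def intro: finite_subset)
  have "dist x v \<le> dist x s" if "v \<in> V" "s \<in> S - V" for v s
  proof -
    \<comment> \<open>Exchanging \<open>v\<close> for \<open>s\<close> gives another admissible set, so the total distance cannot drop.\<close>
    define W where "W = insert s (V - {v})"
    have "card W = card V"
      using that \<open>finite V\<close> card.remove[of V v] by (simp add: W_def)
    moreover have "W \<subseteq> S" using that \<open>V \<subseteq> S\<close> by (auto simp: W_def)
    ultimately have "W \<in> F" using \<open>card V = min k (card S)\<close> by (simp add: F_def)
    moreover have "g W = g V - dist x v + dist x s"
      using that \<open>finite V\<close> by (simp add: W_def g_def sum_diff1)
    ultimately show ?thesis using V_min[of W] by simp
  qed
  with \<open>V \<subseteq> S\<close> \<open>card V = min k (card S)\<close> have "V \<in> nn_sets k S x"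
    by (auto simp: nn_sets_def)
  then show ?thesis by auto
qed

lemma knn_sets_nonempty:
  fixes S :: "'a::metric_space set"
  assumes "finite S"
  shows "knn_sets k f S x \<noteq> {}"
proof -
  have "finite (nn_sets k S x)"
    by (rule finite_subset[of _ "Pow S"]) (auto simp: nn_sets_def assms)
  then obtain V where "is_arg_min (modefreq f) (\<lambda>V. V \<in> nn_sets k S x) V"
    using ex_is_arg_min_if_finite[OF _ nn_sets_nonempty[OF assms], where f = "modefreq f"] by blast
  then have "V \<in> knn_sets k f S x" by (simp add: knn_sets_def is_arg_min_linorder)
  then show ?thesis by blast
qed

lemma nn_sets_subset_ball:
  assumes V: "V \<in> nn_sets k S x" and k: "k \<le> card (S \<inter> ball x r)" and "finite S"
  shows "V \<subseteq> ball x r"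
proof
  fix v assume "v \<in> V"
  have "card (S \<inter> ball x r) \<le> card S" using \<open>finite S\<close> by (simp add: card_mono)
  with V k have "V \<subseteq> S" "card V = k" by (auto simp: nn_sets_def)
  have "finite V" using \<open>V \<subseteq> S\<close> \<open>finite S\<close> by (rule finite_subset)
  show "v \<in> ball x r"
  proof (rule ccontr)
    assume "v \<notin> ball x r"
    have "S \<inter> ball x r \<subseteq> V"
    proof
      fix s assume s: "s \<in> S \<inter> ball x r"
      show "s \<in> V"
      proof (rule ccontr)
        assume "s \<notin> V"
        then have "dist x v \<le> dist x s" using V \<open>v \<in> V\<close> s by (simp add: nn_sets_def)
        then show False using s \<open>v \<notin> ball x r\<close> by simp
      qed
    qed
    with \<open>v \<in> V\<close> \<open>v \<notin> ball x r\<close> have "insert v (S \<inter> ball x r) \<subseteq> V" by auto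
    then have "card (insert v (S \<inter> ball x r)) \<le> k"
      using card_mono[OF \<open>finite V\<close>] \<open>card V = k\<close> by simp
    then show False using k \<open>v \<notin> ball x r\<close> \<open>finite S\<close> by simp
  qed
qed

lemma modes_constant:
  assumes "finite U" "U \<noteq> {}" "\<And>u. u \<in> U \<Longrightarrow> f u = y"
  shows "modes f U = {y}"
proof -
  have "f ` U = {y}" "U \<inter> f -` {y} = U" using assms by auto
  then have freq: "modefreq f U = card U" by (simp add: modefreq_def assms(2))
  have "card (U \<inter> f -` {y'}) = card U \<longleftrightarrow> y' = y" for y'
  proof (cases "y' = y")
    case False
    then have "U \<inter> f -` {y'} = {}" using assms(3) by auto
    then show ?thesis using False assms(1,2) by simp
  qed (simp add: \<open>U \<inter> f -` {y} = U\<close>)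
  then show ?thesis by (auto simp: modes_def freq)
qed

lemma predictions_eq_singleton:
  fixes S :: "'a::metric_space set"
  assumes "finite S" "0 < m" and near: "x \<in> S \<or> m \<le> card (S \<inter> ball x r)"
    and labels: "\<And>s. s \<in> S \<Longrightarrow> s \<in> ball x r \<Longrightarrow> f s = f x"
  shows "predictions m f S x = {f x}"
proof (cases "x \<in> S")
  case True
  moreover have "modes f {x} = {f x}" by (rule modes_constant) auto
  ultimately show ?thesis by (simp add: predictions_def U_sets_def)
next
  case False
  have "modes f U = {f x}" if U: "U \<in> knn_sets m f S x" for U
  proof (rule modes_constant)
    have "U \<in> nn_sets m S x" using U by (simp add: knn_sets_def)
    moreover have "m \<le> card (S \<inter> ball x r)" using near False by simp
    ultimately have "U \<subseteq> ball x r"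
      using \<open>finite S\<close> by (rule nn_sets_subset_ball)
    have "card (S \<inter> ball x r) \<le> card S" using \<open>finite S\<close> by (simp add: card_mono)
    with \<open>U \<in> nn_sets m S x\<close> \<open>m \<le> card (S \<inter> ball x r)\<close> have "U \<subseteq> S" "card U = m"
      by (auto simp: nn_sets_def)
    then show "finite U" "U \<noteq> {}"
      using \<open>finite S\<close> \<open>0 < m\<close> by (auto intro: finite_subset)
    show "\<And>u. u \<in> U \<Longrightarrow> f u = f x"
      using labels \<open>U \<subseteq> S\<close> \<open>U \<subseteq> ball x r\<close> by blast
  qed
  then show ?thesis
    using False knn_sets_nonempty[OF \<open>finite S\<close>, of m f x] by (auto simp: predictions_def U_sets_def)
qed

section \<open>Deterministic behaviour of the selection process\<close>

lemma finite_ex_maximizer: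
  fixes g :: "'a \<Rightarrow> 'b::linorder"
  assumes "finite A" "A \<noteq> {}"
  shows "\<exists>i\<in>A. \<forall>j\<in>A. g j \<le> g i"
proof -
  have "Max (g ` A) \<in> g ` A" using assms by simp
  then obtain i where "i \<in> A" "g i = Max (g ` A)" by auto
  then show ?thesis using assms by (metis Max_ge finite_imageI imageI)
qed

lemma finite_subset_UN_incseq:
  assumes "incseq Z" "finite P" "P \<subseteq> (\<Union>n. Z n)"
  shows "\<exists>N. P \<subseteq> Z N"
  using assms(2,3)
proof (induction P rule: finite_induct)
  case (insert p P)
  then obtain N1 N2 where "p \<in> Z N1" "P \<subseteq> Z N2" by auto
  then have "insert p P \<subseteq> Z (max N1 N2)"
    using monoD[OF assms(1), of N1 "max N1 N2"] monoD[OF assms(1), of N2 "max N1 N2"] by auto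
  then show ?case ..
qed simp

lemma select_index_less:
  assumes "0 < \<kappa> n"
  shows "select_index \<Phi> \<kappa> c n S < \<kappa> n"
proof -
  define best where "best = {i. i < \<kappa> n \<and> (\<forall>j<\<kappa> n. \<Phi> (fst (c n j)) S \<le> \<Phi> (fst (c n i)) S)}"
  define top where "top = {i\<in>best. \<forall>j\<in>best. snd (c n j) \<le> snd (c n i)}"
  have "best \<noteq> {}"
    using finite_ex_maximizer[of "{..<\<kappa> n}" "\<lambda>j. \<Phi> (fst (c n j)) S"] assms by (auto simp: best_def)
  moreover have "finite best" by (simp add: best_def)
  ultimately have "top \<noteq> {}"
    using finite_ex_maximizer[of best "\<lambda>j. snd (c n j)"] by (auto simp: top_def)
  then have "Min top \<in> top" by (intro Min_in) (simp_all add: top_def \<open>finite best\<close>)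
  then have "Min top < \<kappa> n" by (simp add: top_def best_def)
  then show ?thesis
    unfolding select_index_def Let_def best_def[symmetric] top_def[symmetric] .
qed

lemma Zproc_finite: "finite (Zproc \<Phi> \<kappa> c n)"
  by (induction n) auto

lemma incseq_Zproc: "incseq (Zproc \<Phi> \<kappa> c)"
  by (rule incseq_SucI) auto

lemma Zproc_subset_candidates:
  assumes "\<And>n. 1 \<le> n \<Longrightarrow> 0 < \<kappa> n" and "z \<in> Zproc \<Phi> \<kappa> c n"
  shows "\<exists>k i. 1 \<le> k \<and> i < \<kappa> k \<and> z = fst (c k i)"
  using assms(2)
proof (induction n)
  case (Suc n)
  have "select_index \<Phi> \<kappa> c (Suc n) (Zproc \<Phi> \<kappa> c n) < \<kappa> (Suc n)"
    by (rule select_index_less) (simp add: assms(1))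
  with Suc show ?case by auto
qed simp

lemma Zproc_meets_if_all_candidates_in:
  assumes "1 \<le> n" "0 < \<kappa> n" "\<forall>i<\<kappa> n. fst (c n i) \<in> B"
  shows "Zproc \<Phi> \<kappa> c n \<inter> B \<noteq> {}"
proof -
  obtain n' where n': "n = Suc n'" using assms(1) by (cases n) auto
  have "select_index \<Phi> \<kappa> c n (Zproc \<Phi> \<kappa> c n') < \<kappa> n"
    by (rule select_index_less) (rule assms(2))
  then have "fst (c n (select_index \<Phi> \<kappa> c n (Zproc \<Phi> \<kappa> c n'))) \<in> Zproc \<Phi> \<kappa> c n \<inter> B"
    using assms(3) by (simp add: n')
  then show ?thesis by blast
qed

lemma ex_Zproc_in_ball:
  assumes \<kappa>: "\<And>n. 1 \<le> n \<Longrightarrow> 0 < \<kappa> n"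
    and hits: "\<And>k. \<exists>n\<ge>1. \<forall>i<\<kappa> n. fst (c n i) \<in> ball x (inverse (Suc k))"
    and "0 < r"
  shows "\<exists>n. Zproc \<Phi> \<kappa> c n \<inter> ball x r \<noteq> {}"
proof -
  obtain k where "inverse (Suc k) < r" using reals_Archimedean \<open>0 < r\<close> by blast
  then have "ball x (inverse (Suc k)) \<subseteq> ball x r" by (simp add: subset_ball)
  moreover obtain n where "1 \<le> n" "\<forall>i<\<kappa> n. fst (c n i) \<in> ball x (inverse (Suc k))"
    using hits by blast
  then have "Zproc \<Phi> \<kappa> c n \<inter> ball x (inverse (Suc k)) \<noteq> {}"
    using \<kappa> by (intro Zproc_meets_if_all_candidates_in)
  ultimately show ?thesis by blast
qed

lemma eventually_Zproc_many_near:
  assumes \<kappa>: "\<And>n. 1 \<le> n \<Longrightarrow> 0 < \<kappa> n"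
    and hits: "\<And>k. \<exists>n\<ge>1. \<forall>i<\<kappa> n. fst (c n i) \<in> ball x (inverse (Suc k))"
    and "0 < e"
  shows "eventually (\<lambda>n. x \<in> Zproc \<Phi> \<kappa> c n \<or> m \<le> card (Zproc \<Phi> \<kappa> c n \<inter> ball x e)) sequentially"
proof (cases "x \<in> (\<Union>n. Zproc \<Phi> \<kappa> c n)")
  case True
  then obtain N where "x \<in> Zproc \<Phi> \<kappa> c N" by auto
  then have "x \<in> Zproc \<Phi> \<kappa> c n" if "N \<le> n" for n
    using monoD[OF incseq_Zproc[of \<Phi> \<kappa> c] that] by auto
  then show ?thesis unfolding eventually_sequentially by blast
next
  case False
  have "x islimpt (\<Union>n. Zproc \<Phi> \<kappa> c n)"
    unfolding islimpt_approachable
  proof (intro allI impI)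
    fix r :: real assume "0 < r"
    then obtain n z where "z \<in> Zproc \<Phi> \<kappa> c n" "dist x z < r"
      using ex_Zproc_in_ball[where \<kappa> = \<kappa> and \<Phi> = \<Phi>, OF \<kappa> hits] by fastforce
    with False show "\<exists>z\<in>\<Union>n. Zproc \<Phi> \<kappa> c n. z \<noteq> x \<and> dist z x < r"
      by (metis UN_I UNIV_I dist_commute)
  qed
  then have "infinite ((\<Union>n. Zproc \<Phi> \<kappa> c n) \<inter> ball x e)"
    using \<open>0 < e\<close> by (simp add: islimpt_eq_infinite_ball)
  then obtain P where P: "P \<subseteq> (\<Union>n. Zproc \<Phi> \<kappa> c n) \<inter> ball x e" "finite P" "card P = m"
    using infinite_arbitrarily_large by blast
  then obtain N where "P \<subseteq> Zproc \<Phi> \<kappa> c N"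
    using finite_subset_UN_incseq[OF incseq_Zproc] by blast
  have "m \<le> card (Zproc \<Phi> \<kappa> c n \<inter> ball x e)" if "N \<le> n" for n
  proof -
    have "P \<subseteq> Zproc \<Phi> \<kappa> c n \<inter> ball x e"
      using \<open>P \<subseteq> Zproc \<Phi> \<kappa> c N\<close> monoD[OF incseq_Zproc[of \<Phi> \<kappa> c] that] P(1) by auto
    then show ?thesis using P(3) by (auto intro: card_mono Zproc_finite)
  qed
  then show ?thesis unfolding eventually_sequentially by blast
qed

lemma eventually_predictions_Zproc_eq:
  assumes \<kappa>: "\<And>n. 1 \<le> n \<Longrightarrow> 0 < \<kappa> n" and "0 < m" "0 < e"
    and labels: "\<forall>n i. 1 \<le> n \<and> i < \<kappa> n \<longrightarrow> fst (c n i) \<notin> ball x e - f -` {f x}"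
    and hits: "\<forall>k. \<exists>n\<ge>1. \<forall>i<\<kappa> n. fst (c n i) \<in> ball x (inverse (Suc k))"
  shows "eventually (\<lambda>n. predictions m f (Zproc \<Phi> \<kappa> c n) x = {f x}) sequentially"
proof -
  have "eventually (\<lambda>n. x \<in> Zproc \<Phi> \<kappa> c n \<or> m \<le> card (Zproc \<Phi> \<kappa> c n \<inter> ball x e)) sequentially"
    by (rule eventually_Zproc_many_near[OF _ hits[rule_format] \<open>0 < e\<close>]) (fact \<kappa>)
  then show ?thesis
  proof eventually_elim
    case (elim n)
    show ?case
    proof (rule predictions_eq_singleton[OF Zproc_finite \<open>0 < m\<close> elim])
      fix s assume s: "s \<in> Zproc \<Phi> \<kappa> c n" "s \<in> ball x e"
      have "\<exists>k i. 1 \<le> k \<and> i < \<kappa> k \<and> s = fst (c k i)"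
        by (rule Zproc_subset_candidates[OF _ s(1)]) (fact \<kappa>)
      then show "f s = f x" using labels s(2) by blast
    qed
  qed
qed

section \<open>Independent candidates\<close>

lemma not_summable_tail_sum_unbounded:
  fixes a :: "nat \<Rightarrow> real"
  assumes nonneg: "\<And>n. 0 \<le> a n" and "\<not> summable a"
  shows "\<exists>L>k. c \<le> (\<Sum>n\<in>{k..<L}. a n)"
proof (rule ccontr)
  assume "\<not> ?thesis"
  then have bounded: "(\<Sum>n\<in>{k..<L}. a n) < c" if "k < L" for L
    using that by (meson not_le)
  have "summable a"
  proof (rule summableI_nonneg_bounded)
    show "(\<Sum>i<L. a i) \<le> (\<Sum>n<k. a n) + \<bar>c\<bar>" for L
    proof (cases "k < L")
      case True
      then have "(\<Sum>i<L. a i) = (\<Sum>n<k. a n) + (\<Sum>n\<in>{k..<L}. a n)"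
        by (simp add: lessThan_atLeast0 sum.atLeastLessThan_concat)
      then show ?thesis using bounded[OF True] by linarith
    next
      case False
      then have "(\<Sum>i<L. a i) \<le> (\<Sum>n<k. a n)" using nonneg by (intro sum_mono2) auto
      then show ?thesis by linarith
    qed
  qed (rule nonneg)
  with \<open>\<not> summable a\<close> show False by contradiction
qed

lemma (in prob_space) AE_ex_notin_indep_events:
  assumes indep: "indep_events F {k..}" and diverge: "\<not> summable (\<lambda>n. 1 - prob (F n))"
  shows "AE \<omega> in M. \<exists>n\<ge>k. \<omega> \<notin> F n"
proof -
  have F: "F n \<in> events" if "k \<le> n" for n
    using indep that by (auto simp: indep_events_def)
  define D where "D = (\<Inter>n\<in>{k..}. F n)"
  have "D \<in> events" unfolding D_def using F by (intro sets.countable_INT) auto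
  have D_le: "prob D \<le> exp (- c)" for c
  proof -
    have "\<exists>L>k. c \<le> (\<Sum>n\<in>{k..<L}. 1 - prob (F n))"
      by (rule not_summable_tail_sum_unbounded[OF _ diverge]) (simp add: prob_le_1)
    then obtain L where "k < L" and c: "c \<le> (\<Sum>n\<in>{k..<L}. 1 - prob (F n))" by blast
    have "prob D \<le> prob (\<Inter>n\<in>{k..<L}. F n)"
      using F \<open>k < L\<close> by (intro finite_measure_mono) (auto simp: D_def)
    also have "\<dots> = (\<Prod>n\<in>{k..<L}. prob (F n))"
      using indep_setsD[OF indep[unfolded indep_events_def_alt], of "{k..<L}" F] \<open>k < L\<close>
      by (auto simp: subset_eq)
    also have "\<dots> \<le> (\<Prod>n\<in>{k..<L}. exp (prob (F n) - 1))"
    proof (intro prod_mono conjI)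
      fix n
      show "prob (F n) \<le> exp (prob (F n) - 1)" using exp_ge_add_one_self[of "prob (F n) - 1"] by simp
    qed simp
    also have "\<dots> = exp (- (\<Sum>n\<in>{k..<L}. 1 - prob (F n)))"
      by (simp add: exp_sum[symmetric] sum_negf[symmetric])
    also have "\<dots> \<le> exp (- c)" using c by simp
    finally show ?thesis .
  qed
  have "prob D = 0"
  proof (rule ccontr)
    assume "prob D \<noteq> 0"
    then have "0 < prob D" using measure_nonneg[of M D] by linarith
    then have "exp (- (1 - ln (prob D))) < prob D" by (simp add: exp_diff field_simps)
    with D_le show False by (meson not_le)
  qed
  with \<open>D \<in> events\<close> have "D \<in> null_sets M" by (simp add: null_sets_def emeasure_eq_measure)
  then show ?thesis by (rule AE_I') (auto simp: D_def)
qed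

locale iid_candidates = prob_space M
  for M :: "'w measure" +
  fixes P :: "'v measure" and cand :: "nat \<Rightarrow> nat \<Rightarrow> 'w \<Rightarrow> 'v" and \<kappa> :: "nat \<Rightarrow> nat"
  assumes indep_cand: "indep_vars (\<lambda>_. P) (\<lambda>(n, i). cand n i) {(n, i). 1 \<le> n \<and> i < \<kappa> n}"
    and distr_cand: "\<And>n i. 1 \<le> n \<Longrightarrow> i < \<kappa> n \<Longrightarrow> distr M P (cand n i) = P"
begin

lemma measurable_cand: "1 \<le> n \<Longrightarrow> i < \<kappa> n \<Longrightarrow> cand n i \<in> measurable M P"
  using indep_cand by (auto simp: indep_vars_def2)

lemma prob_cand_vimage:
  assumes "1 \<le> n" "i < \<kappa> n" "A \<in> sets P"
  shows "prob (cand n i -` A \<inter> space M) = measure P A"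
  using measure_distr[OF measurable_cand[OF assms(1,2)] assms(3)] distr_cand[OF assms(1,2)] by simp

lemma AE_cand_notin_null_set:
  assumes "A \<in> null_sets P"
  shows "AE \<omega> in M. \<forall>n i. 1 \<le> n \<and> i < \<kappa> n \<longrightarrow> cand n i \<omega> \<notin> A"
proof -
  have "AE \<omega> in M. cand n i \<omega> \<notin> A" if "1 \<le> n" "i < \<kappa> n" for n i
  proof -
    have "AE v in distr M P (cand n i). v \<notin> A"
      unfolding distr_cand[OF that] by (rule AE_not_in[OF assms])
    then show ?thesis by (rule AE_distrD[OF measurable_cand[OF that]])
  qed
  then have "AE \<omega> in M. 1 \<le> n \<and> i < \<kappa> n \<longrightarrow> cand n i \<omega> \<notin> A" for n i
    by (cases "1 \<le> n \<and> i < \<kappa> n") simp_all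
  then show ?thesis by (simp add: AE_all_countable)
qed

lemma sets_all_cand_in:
  assumes "1 \<le> n" "A \<in> sets P"
  shows "{\<omega> \<in> space M. \<forall>i<\<kappa> n. cand n i \<omega> \<in> A} \<in> events"
proof (cases "\<kappa> n = 0")
  case False
  then have "{\<omega> \<in> space M. \<forall>i<\<kappa> n. cand n i \<omega> \<in> A} = (\<Inter>i<\<kappa> n. cand n i -` A \<inter> space M)"
    by auto
  also have "\<dots> \<in> events"
    using False assms by (intro sets.finite_INT measurable_sets[OF measurable_cand]) auto
  finally show ?thesis .
qed simp

lemma prob_all_cand_in:
  assumes "1 \<le> n" "A \<in> sets P"
  shows "prob {\<omega> \<in> space M. \<forall>i<\<kappa> n. cand n i \<omega> \<in> A} = measure P A ^ \<kappa> n"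
proof (cases "\<kappa> n = 0")
  case False
  define J where "J = {n} \<times> {..<\<kappa> n}"
  have J: "J \<noteq> {}" "finite J" "J \<subseteq> {(n, i). 1 \<le> n \<and> i < \<kappa> n}" and "card J = \<kappa> n"
    using assms(1) False by (auto simp: J_def)
  have "{\<omega> \<in> space M. \<forall>i<\<kappa> n. cand n i \<omega> \<in> A} = (\<Inter>j\<in>J. (\<lambda>(n, i). cand n i) j -` A \<inter> space M)"
    using False by (auto simp: J_def)
  also have "prob \<dots> = (\<Prod>j\<in>J. prob ((\<lambda>(n, i). cand n i) j -` A \<inter> space M))"
    by (rule indep_varsD[OF indep_cand]) (use J assms(2) in auto)
  also have "\<dots> = (\<Prod>j\<in>J. measure P A)"
    using assms by (intro prod.cong) (auto simp: J_def prob_cand_vimage)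
  finally show ?thesis using \<open>card J = \<kappa> n\<close> by simp
qed (simp add: prob_space)

lemma indep_events_not_all_cand_in:
  assumes "A \<in> sets P"
  shows "indep_events (\<lambda>n. {\<omega> \<in> space M. \<not> (\<forall>i<\<kappa> n. cand n i \<omega> \<in> A)}) {1..}"
proof -
  define K where "K n = {n} \<times> {..<\<kappa> n}" for n
  have "indep_vars (\<lambda>n. \<Pi>\<^sub>M j\<in>K n. P) (\<lambda>n \<omega>. \<lambda>j\<in>K n. (\<lambda>(n, i). cand n i) j \<omega>) {1..}"
    using indep_cand by (rule indep_vars_restrict) (auto simp: K_def disjoint_family_on_def)
  then have "indep_events (\<lambda>n. {\<omega> \<in> space M. (\<lambda>j\<in>K n. (\<lambda>(n, i). cand n i) j \<omega>) \<notin> (\<Pi>\<^sub>E j\<in>K n. A)}) {1..}"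
  proof (rule indep_eventsI_indep_vars)
    fix n
    have "{y \<in> space (\<Pi>\<^sub>M j\<in>K n. P). y \<notin> (\<Pi>\<^sub>E j\<in>K n. A)} = space (\<Pi>\<^sub>M j\<in>K n. P) - (\<Pi>\<^sub>E j\<in>K n. A)"
      by auto
    also have "\<dots> \<in> sets (\<Pi>\<^sub>M j\<in>K n. P)"
      using assms by (intro sets.compl_sets sets_PiM_I_finite) (auto simp: K_def)
    finally show "{y \<in> space (\<Pi>\<^sub>M j\<in>K n. P). y \<notin> (\<Pi>\<^sub>E j\<in>K n. A)} \<in> sets (\<Pi>\<^sub>M j\<in>K n. P)" .
  qed
  then show ?thesis by (simp add: K_def restrict_PiE_iff Pi_iff Bex_def)
qed

lemma AE_ex_step_all_cand_in:
  assumes A: "A \<in> sets P" and diverge: "\<not> summable (\<lambda>n. measure P A ^ \<kappa> n)"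
  shows "AE \<omega> in M. \<exists>n\<ge>1. \<forall>i<\<kappa> n. cand n i \<omega> \<in> A"
proof -
  define miss where "miss n = {\<omega> \<in> space M. \<not> (\<forall>i<\<kappa> n. cand n i \<omega> \<in> A)}" for n
  have "1 - prob (miss n) = measure P A ^ \<kappa> n" if "1 \<le> n" for n
  proof -
    let ?hit = "{\<omega> \<in> space M. \<forall>i<\<kappa> n. cand n i \<omega> \<in> A}"
    have "miss n = space M - ?hit" by (auto simp: miss_def)
    then have "prob (miss n) = 1 - prob ?hit"
      using sets_all_cand_in[OF that A] by (simp only: prob_compl)
    then show ?thesis using prob_all_cand_in[OF that A] by linarith
  qed
  then have "eventually (\<lambda>n. 1 - prob (miss n) = measure P A ^ \<kappa> n) sequentially"
    by (rule eventually_mono[OF eventually_ge_at_top])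
  then have "summable (\<lambda>n. 1 - prob (miss n)) = summable (\<lambda>n. measure P A ^ \<kappa> n)"
    by (rule summable_cong)
  with diverge have "\<not> summable (\<lambda>n. 1 - prob (miss n))" by simp
  with indep_events_not_all_cand_in[OF A] have "AE \<omega> in M. \<exists>n\<ge>1. \<omega> \<notin> miss n"
    unfolding miss_def by (rule AE_ex_notin_indep_events)
  with AE_space show ?thesis by eventually_elim (auto simp: miss_def)
qed

end

lemma iid_candidates_fst:
  assumes "iid_candidates M (N \<Otimes>\<^sub>M U) cand \<kappa>" and "prob_space U"
  shows "iid_candidates M N (\<lambda>n i \<omega>. fst (cand n i \<omega>)) \<kappa>"
proof -
  interpret iid_candidates M "N \<Otimes>\<^sub>M U" cand \<kappa> by fact
  have "indep_vars (\<lambda>_. N) (\<lambda>j. fst \<circ> (\<lambda>(n, i). cand n i) j) {(n, i). 1 \<le> n \<and> i < \<kappa> n}"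
    by (rule indep_vars_compose[OF indep_cand]) simp
  moreover have "(\<lambda>j. fst \<circ> (\<lambda>(n, i). cand n i) j) = (\<lambda>(n, i) \<omega>. fst (cand n i \<omega>))"
    by (auto simp: fun_eq_iff)
  moreover have "distr M N (\<lambda>\<omega>. fst (cand n i \<omega>)) = N" if "1 \<le> n" "i < \<kappa> n" for n i
  proof -
    have "distr M N (\<lambda>\<omega>. fst (cand n i \<omega>)) = distr (distr M (N \<Otimes>\<^sub>M U) (cand n i)) N fst"
      by (simp add: distr_distr[OF measurable_fst measurable_cand[OF that]] comp_def)
    also have "\<dots> = N"
      using distr_cand[OF that] prob_space.distr_pair_fst[OF \<open>prob_space U\<close>] by simp
    finally show ?thesis .
  qed
  ultimately show ?thesis
    by (intro iid_candidates.intro iid_candidates_axioms.intro prob_space_axioms) simp_all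
qed

theorem mainTheorem12:
  fixes \<mu> :: "'a::metric_space measure"
    and f :: "'a \<Rightarrow> 'b::countable"
    and M :: "'w measure"
    and cand :: "nat \<Rightarrow> nat \<Rightarrow> 'w \<Rightarrow> 'a \<times> real"
    and \<kappa> :: "nat \<Rightarrow> nat"
    and m K :: nat
    and x :: 'a
    and C :: "'a set"
  assumes "prob_space \<mu>" and "sets \<mu> = sets borel"
    and "\<And>y. f -` {y} \<in> sets \<mu>"
    and "m > 1" and "K > m div 2"
    and "\<And>n. n \<ge> 1 \<Longrightarrow> \<kappa> n \<ge> 1"
    and "\<And>\<rho>::real. 0 < \<rho> \<Longrightarrow> \<rho> \<le> 1 \<Longrightarrow> \<not> summable (\<lambda>n. \<rho> ^ \<kappa> n)"
    and "prob_space M"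
    and "prob_space.indep_vars M (\<lambda>_. \<mu> \<Otimes>\<^sub>M uniform_measure lborel {0..1})
           (\<lambda>(n, i). cand n i) {(n, i). 1 \<le> n \<and> i < \<kappa> n}"
    and "\<And>n i. 1 \<le> n \<Longrightarrow> i < \<kappa> n \<Longrightarrow>
           distr M (\<mu> \<Otimes>\<^sub>M uniform_measure lborel {0..1}) (cand n i)
             = \<mu> \<Otimes>\<^sub>M uniform_measure lborel {0..1}"
    and "f_contiguous_component \<mu> f C" and "C \<in> sets \<mu>" and "emeasure \<mu> C > 0"
    and "x \<in> C"
  shows "AE \<omega> in M. eventually (\<lambda>n.
           predictions m f (Zproc (Phi_knn K f) \<kappa> (\<lambda>n i. cand n i \<omega>) n) x = {f x}) sequentially"
proof -
  let ?U = "uniform_measure lborel {0..1::real}"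
  interpret \<mu>: prob_space \<mu> by fact
  have "prob_space ?U" by (rule prob_space_uniform_measure) auto
  moreover have "iid_candidates M (\<mu> \<Otimes>\<^sub>M ?U) cand \<kappa>"
    using assms(8-10) by (simp add: iid_candidates_def iid_candidates_axioms_def)
  ultimately interpret iid_candidates M \<mu> "\<lambda>n i \<omega>. fst (cand n i \<omega>)" \<kappa>
    by (intro iid_candidates_fst)
  have balls: "ball x r \<in> sets \<mu>" for r using assms(2) by simp
  have x: "x \<in> supp_measure \<mu>" "\<not> f_boundary_point \<mu> f x"
    using assms(11,14) by (auto simp: f_contiguous_component_def f_contiguous_def)
  then obtain e where "0 < e" and "ball x e - f -` {f x} \<in> null_sets \<mu>"
    using balls assms(3) by (auto simp: f_boundary_point_def null_sets_def)
  then have "AE \<omega> in M. \<forall>n i. 1 \<le> n \<and> i < \<kappa> n \<longrightarrow> fst (cand n i \<omega>) \<notin> ball x e - f -` {f x}"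
    by (intro AE_cand_notin_null_set)
  moreover have "AE \<omega> in M. \<forall>k. \<exists>n\<ge>1. \<forall>i<\<kappa> n. fst (cand n i \<omega>) \<in> ball x (inverse (Suc k))"
  proof (subst AE_all_countable, intro allI AE_ex_step_all_cand_in balls)
    fix k :: nat
    have "0 < measure \<mu> (ball x (inverse (Suc k)))"
      using x(1) by (simp add: supp_measure_def \<mu>.emeasure_eq_measure)
    then show "\<not> summable (\<lambda>n. measure \<mu> (ball x (inverse (Suc k))) ^ \<kappa> n)"
      using assms(7) \<mu>.prob_le_1 by blast
  qed
  ultimately show ?thesis
  proof eventually_elim
    case (elim \<omega>)
    then show ?case
      using assms(4,6) by (intro eventually_predictions_Zproc_eq[OF _ _ \<open>0 < e\<close>]) (auto simp: Suc_le_eq)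
  qed
qed

end
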